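(* Let $S=\{s_1<\dots<s_{k_1}\}$ and $T=\{t_1<\dots<t_{k_2}\}$ be nonempty subsets of $\{1,\dots,n-1\}$ with $\max S+\min T\le n$ and $\min S+\max T\le n$, let $A=T_n\langle S;T\rangle$, $d=\gcd\{s+t: s\in S,t\in T\}$ and $d'=\gcd(d,s_1)$. Suppose that for each $1\le i\le d$ the principal submatrix of the Boolean product $AA^T$ with rows and columns indexed by $\{v\in[n]: v\equiv i\pmod d\}$ is irreducible. Then the competition index of $A$ is at most $$2\big(\lceil n/d\rceil-1\big)\Big(\max\Big\{\Big\lceil\tfrac{t_{k_2}}{s_1}\Big\rceil,\Big\lceil\tfrac{s_{k_1}}{t_1}\Big\rceil\Big\}+1\Big)+2(s_1+t_1).$$
   Context: Boolean arithmetic on $\{0,1\}$: $1+1=1$. $T_n\langle S;T\rangle$ is the $n\times n$ $(0,1)$-matrix whose $(i,j)$-entry is $1$ iff $j-i\in S$ or $i-j\in T$. The competition index of $A$ is the smallest positive integer $q$ such that $A^{q+i}(A^T)^{q+i}=A^{q+r+i}(A^T)^{q+r+i}$ for some $r\ge1$ and all $i\ge0$. *)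

theory Defs
  imports Complex_Main
begin

text \<open>Boolean n x n matrices with index set [n] = {1..n}, represented as
  predicates on nat x nat; all operations are False outside [n] x [n].\<close>

type_synonym bmat = "nat \<Rightarrow> nat \<Rightarrow> bool"

definition bmult :: "nat \<Rightarrow> bmat \<Rightarrow> bmat \<Rightarrow> bmat" where
  "bmult n A B = (\<lambda>i j. i \<in> {1..n} \<and> j \<in> {1..n} \<and> (\<exists>k\<in>{1..n}. A i k \<and> B k j))"

definition btrans :: "nat \<Rightarrow> bmat \<Rightarrow> bmat" where
  "btrans n A = (\<lambda>i j. i \<in> {1..n} \<and> j \<in> {1..n} \<and> A j i)"

definition bident :: "nat \<Rightarrow> bmat" where
  "bident n = (\<lambda>i j. i \<in> {1..n} \<and> i = j)"

primrec bpow :: "nat \<Rightarrow> bmat \<Rightarrow> nat \<Rightarrow> bmat" where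
  "bpow n A 0 = bident n"
| "bpow n A (Suc k) = bmult n (bpow n A k) A"

definition toeplitz :: "nat \<Rightarrow> nat set \<Rightarrow> nat set \<Rightarrow> bmat" where
  "toeplitz n S T = (\<lambda>i j. i \<in> {1..n} \<and> j \<in> {1..n} \<and>
      ((i < j \<and> j - i \<in> S) \<or> (j < i \<and> i - j \<in> T)))"

definition comp_mat :: "nat \<Rightarrow> bmat \<Rightarrow> nat \<Rightarrow> bmat" where
  "comp_mat n A m = bmult n (bpow n A m) (bpow n (btrans n A) m)"

definition competition_index :: "nat \<Rightarrow> bmat \<Rightarrow> nat" where
  "competition_index n A = (LEAST q. q > 0 \<and>
     (\<exists>r\<ge>1. \<forall>i. comp_mat n A (q + i) = comp_mat n A (q + r + i)))"

definition irreducible_on :: "nat set \<Rightarrow> bmat \<Rightarrow> bool" where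
  "irreducible_on V M = (\<forall>u\<in>V. \<forall>v\<in>V. (u, v) \<in> {(x, y). x \<in> V \<and> y \<in> V \<and> M x y}\<^sup>*)"

end

theory Submission
  imports Defs
begin

text \<open>
  Write s1 = Min S, t1 = Min T and N = s1 + t1. A walk of length m in the digraph of
  A = T_n<S;T> moves up by elements of S and down by elements of T; compared with m moves
  up by s1 it is displaced by a drift, a sum of terms s - s1 and -t - s1. Each such term is
  divisible by d, and the two cheapest moves, up by s1 and down by t1, have drift 0 modulo N.
  So the (u, v) entry of A^m (A^T)^m, which asks for a common endpoint of walks of length m
  from u and from v, can only be 1 when u and v are congruent modulo d.

  Conversely, if u and v are congruent modulo d, then u - v is congruent modulo N to a sum of
  fewer than N/d drifts, none of them divisible by N: no block of consecutive terms of a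
  shortest such sum vanishes modulo N, and pigeonholing its prefix sums bounds its length.
  Realise these drifts on a walk from v, moves by S near the bottom of [1, n] and moves by T
  near the top, and climb greedily from u. Both walks can then be kept inside the window
  (n - N, n], where they meet because their endpoints agree modulo N. Counting steps shows
  that A^m (A^T)^m is the congruence modulo d for all m beyond the stated bound, so the
  competition index is at most the bound, with period 1.
\<close>

section \<open>Boolean matrix powers as relation powers\<close>

definition arcs :: "bmat \<Rightarrow> nat rel" where
  "arcs A = {(x, y). A x y}"

lemma bpow_in_range: "bpow n A m x y \<Longrightarrow> x \<in> {1..n} \<and> y \<in> {1..n}"
  by (induction m arbitrary: y) (auto simp: bident_def bmult_def)

lemma bpow_iff_relpow:
  assumes "\<And>i j. A i j \<Longrightarrow> i \<in> {1..n} \<and> j \<in> {1..n}"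
  shows "bpow n A m x y \<longleftrightarrow> x \<in> {1..n} \<and> (x, y) \<in> arcs A ^^ m"
proof (induction m arbitrary: y)
  case 0
  show ?case by (auto simp: bident_def)
next
  case (Suc m)
  have "bpow n A (Suc m) x y \<longleftrightarrow>
      x \<in> {1..n} \<and> y \<in> {1..n} \<and> (\<exists>k\<in>{1..n}. bpow n A m x k \<and> A k y)"
    by (simp add: bmult_def)
  also have "\<dots> \<longleftrightarrow> x \<in> {1..n} \<and> (\<exists>k. (x, k) \<in> arcs A ^^ m \<and> (k, y) \<in> arcs A)"
    unfolding Suc.IH arcs_def using assms by blast
  also have "\<dots> \<longleftrightarrow> x \<in> {1..n} \<and> (x, y) \<in> arcs A ^^ Suc m"
    by auto
  finally show ?case .
qed

lemma relpow_converse_iff: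
  fixes R :: "'a rel"
  shows "(x, y) \<in> (R\<inverse>) ^^ m \<longleftrightarrow> (y, x) \<in> R ^^ m"
proof (induction m arbitrary: y)
  case (Suc m)
  have "(x, y) \<in> (R\<inverse>) ^^ Suc m \<longleftrightarrow> (y, x) \<in> R O R ^^ m"
    using Suc by auto
  also have "\<dots> \<longleftrightarrow> (y, x) \<in> R ^^ Suc m"
    by (simp only: relpow_commute relpow.simps)
  finally show ?case .
qed auto

lemma bpow_btrans:
  assumes A_range: "\<And>i j. A i j \<Longrightarrow> i \<in> {1..n} \<and> j \<in> {1..n}"
  shows "bpow n (btrans n A) m x y \<longleftrightarrow> bpow n A m y x"
proof -
  have btrans_range: "\<And>i j. btrans n A i j \<Longrightarrow> i \<in> {1..n} \<and> j \<in> {1..n}"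
    by (simp add: btrans_def)
  have "arcs (btrans n A) = (arcs A)\<inverse>"
    using A_range by (auto simp: arcs_def btrans_def)
  then have "bpow n (btrans n A) m x y \<longleftrightarrow> x \<in> {1..n} \<and> (y, x) \<in> arcs A ^^ m"
    by (simp only: bpow_iff_relpow[OF btrans_range] relpow_converse_iff)
  moreover have "bpow n A m y x \<longleftrightarrow> y \<in> {1..n} \<and> (y, x) \<in> arcs A ^^ m"
    by (rule bpow_iff_relpow[OF A_range])
  ultimately show ?thesis
    using bpow_in_range[of n A m y x] bpow_in_range[of n "btrans n A" m x y] by blast
qed

lemma comp_mat_iff:
  assumes A_range: "\<And>i j. A i j \<Longrightarrow> i \<in> {1..n} \<and> j \<in> {1..n}"
  shows "comp_mat n A m u v \<longleftrightarrow>
    u \<in> {1..n} \<and> v \<in> {1..n} \<and> (\<exists>k. (u, k) \<in> arcs A ^^ m \<and> (v, k) \<in> arcs A ^^ m)"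
proof -
  have "comp_mat n A m u v \<longleftrightarrow>
      u \<in> {1..n} \<and> v \<in> {1..n} \<and> (\<exists>k\<in>{1..n}. bpow n A m u k \<and> bpow n A m v k)"
    by (simp add: comp_mat_def bmult_def bpow_btrans[OF A_range])
  also have "\<dots> \<longleftrightarrow>
      u \<in> {1..n} \<and> v \<in> {1..n} \<and> (\<exists>k. (u, k) \<in> arcs A ^^ m \<and> (v, k) \<in> arcs A ^^ m)"
  proof (intro conj_cong refl iffI)
    assume "\<exists>k\<in>{1..n}. bpow n A m u k \<and> bpow n A m v k"
    then obtain k where "bpow n A m u k" "bpow n A m v k" by blast
    then show "\<exists>k. (u, k) \<in> arcs A ^^ m \<and> (v, k) \<in> arcs A ^^ m"
      by (auto simp: bpow_iff_relpow[OF A_range])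
  next
    assume "u \<in> {1..n}" "v \<in> {1..n}" "\<exists>k. (u, k) \<in> arcs A ^^ m \<and> (v, k) \<in> arcs A ^^ m"
    then obtain k where "bpow n A m u k" "bpow n A m v k"
      by (auto simp: bpow_iff_relpow[OF A_range])
    then show "\<exists>k\<in>{1..n}. bpow n A m u k \<and> bpow n A m v k"
      using bpow_in_range[of n A m u k] by blast
  qed
  finally show ?thesis .
qed

lemma competition_index_le:
  assumes "0 < q" and "\<And>m. q \<le> m \<Longrightarrow> comp_mat n A m = comp_mat n A q"
  shows "competition_index n A \<le> q"
  unfolding competition_index_def
proof (rule Least_le)
  have "comp_mat n A (q + i) = comp_mat n A q" "comp_mat n A (q + 1 + i) = comp_mat n A q" for i
    by (rule assms(2), simp)+
  then have "\<forall>i. comp_mat n A (q + i) = comp_mat n A (q + 1 + i)"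
    by simp
  then show "0 < q \<and> (\<exists>r\<ge>1. \<forall>i. comp_mat n A (q + i) = comp_mat n A (q + r + i))"
    using assms(1) by blast
qed

section \<open>Zero-sum blocks\<close>

lemma dvd_sum_list: "(\<And>x. x \<in> set xs \<Longrightarrow> d dvd x) \<Longrightarrow> d dvd sum_list xs"
  for d :: "'a::comm_semiring_1"
  by (induction xs) auto

lemma zero_sum_block:
  fixes xs :: "int list" and h :: nat
  assumes dvd: "\<And>x. x \<in> set xs \<Longrightarrow> d dvd x" and "0 < h" and "h \<le> length xs"
  shows "\<exists>ys zs ws. xs = ys @ zs @ ws \<and> zs \<noteq> [] \<and> d * int h dvd sum_list zs"
proof -
  define P where "P i = sum_list (take i xs)" for i
  define f where "f i = (P i div d) mod int h" for i
  have "f ` {0..h} \<subseteq> {0..<int h}"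
    using \<open>0 < h\<close> by (auto simp: f_def)
  then have "card (f ` {0..h}) < card {0..h}"
    using card_mono[of "{0..<int h}" "f ` {0..h}"] by simp
  then have "\<not> inj_on f {0..h}"
    by (rule pigeonhole)
  then obtain i j where ij: "i < j" "j \<le> h" "f i = f j"
    unfolding inj_on_def by (metis atLeastAtMost_iff linorder_neqE_nat)
  define zs where "zs = take (j - i) (drop i xs)"
  have take_j: "take j xs = take i xs @ zs"
    using take_add[of i "j - i" xs] ij(1) by (simp add: zs_def)
  have "P j - P i = sum_list zs"
    by (simp add: P_def take_j)
  have "d dvd P i" "d dvd P j"
    unfolding P_def by (auto intro: dvd_sum_list dvd dest: in_set_takeD)
  moreover have "int h dvd P j div d - P i div d"
    using ij(3) unfolding f_def by (simp add: mod_eq_dvd_iff dvd_diff_commute)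
  ultimately have "d * int h dvd d * (P j div d - P i div d)"
    by (simp add: mult_dvd_mono)
  also have "d * (P j div d - P i div d) = sum_list zs"
    using \<open>d dvd P i\<close> \<open>d dvd P j\<close> \<open>P j - P i = sum_list zs\<close>
    by (simp add: right_diff_distrib)
  finally have "d * int h dvd sum_list zs" .
  moreover have "xs = take i xs @ zs @ drop j xs"
    using take_j append_take_drop_id[of j xs] by simp
  moreover have "zs \<noteq> []"
    using ij assms(3) by (simp add: zs_def)
  ultimately show ?thesis by blast
qed

lemma Gcd_mem_closed:
  fixes G :: "int set" and X :: "nat set"
  assumes "finite X" and "int ` X \<subseteq> G" and "0 \<in> G"
    and add: "\<And>x y. x \<in> G \<Longrightarrow> y \<in> G \<Longrightarrow> x + y \<in> G"
    and mult: "\<And>j x. x \<in> G \<Longrightarrow> j * x \<in> G"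
  shows "int (Gcd X) \<in> G"
  using assms(1,2)
proof (induction X rule: finite_induct)
  case empty
  then show ?case using \<open>0 \<in> G\<close> by simp
next
  case (insert x X)
  obtain u v where "u * int x + v * int (Gcd X) = gcd (int x) (int (Gcd X))"
    using bezout_int by blast
  moreover have "u * int x + v * int (Gcd X) \<in> G"
    using insert by (intro add mult) auto
  ultimately show ?case by simp
qed

section \<open>Walks in the Toeplitz digraph\<close>

lemma toeplitz_range: "toeplitz n S T i j \<Longrightarrow> i \<in> {1..n} \<and> j \<in> {1..n}"
  by (simp add: toeplitz_def)

locale toeplitz_digraph =
  fixes n :: nat and S T :: "nat set"
  assumes S_nonempty: "S \<noteq> {}" and T_nonempty: "T \<noteq> {}"
    and S_range: "S \<subseteq> {1..n-1}" and T_range: "T \<subseteq> {1..n-1}"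
    and Max_S_Min_T: "Max S + Min T \<le> n" and Min_S_Max_T: "Min S + Max T \<le> n"
begin

abbreviation E :: "nat rel" where
  "E \<equiv> arcs (toeplitz n S T)"

definition s1 :: nat where "s1 = Min S"
definition t1 :: nat where "t1 = Min T"
definition N :: nat where "N = s1 + t1"

lemma finite_S: "finite S"
  using S_range finite_subset by blast

lemma finite_T: "finite T"
  using T_range finite_subset by blast

lemma s1_in_S: "s1 \<in> S"
  unfolding s1_def using finite_S S_nonempty by simp

lemma t1_in_T: "t1 \<in> T"
  unfolding t1_def using finite_T T_nonempty by simp

lemma s1_le: "s \<in> S \<Longrightarrow> s1 \<le> s"
  unfolding s1_def using finite_S by simp

lemma t1_le: "t \<in> T \<Longrightarrow> t1 \<le> t"
  unfolding t1_def using finite_T by simp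

lemma s1_pos: "0 < s1"
  using s1_in_S S_range by fastforce

lemma t1_pos: "0 < t1"
  using t1_in_T T_range by fastforce

lemma S_plus_t1_le: "s \<in> S \<Longrightarrow> s + t1 \<le> n"
  using Max_ge[OF finite_S] Max_S_Min_T unfolding t1_def by fastforce

lemma s1_plus_T_le: "t \<in> T \<Longrightarrow> s1 + t \<le> n"
  using Max_ge[OF finite_T] Min_S_Max_T unfolding s1_def by fastforce

lemma N_le_n: "N \<le> n"
  using s1_plus_T_le[OF t1_in_T] unfolding N_def .

lemma arc_iff:
  "(x, y) \<in> E \<longleftrightarrow> x \<in> {1..n} \<and> y \<in> {1..n} \<and> (x < y \<and> y - x \<in> S \<or> y < x \<and> x - y \<in> T)"
  by (simp add: arcs_def toeplitz_def)

lemma arc_up: "1 \<le> x \<Longrightarrow> s \<in> S \<Longrightarrow> x + s \<le> n \<Longrightarrow> (x, x + s) \<in> E"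
  using s1_pos s1_le[of s] by (auto simp: arc_iff)

lemma arc_down: "t \<in> T \<Longrightarrow> t < x \<Longrightarrow> x \<le> n \<Longrightarrow> (x, x - t) \<in> E"
  using t1_pos t1_le[of t] by (auto simp: arc_iff)

lemma out_arc:
  assumes "x \<in> {1..n}"
  obtains y where "(x, y) \<in> E"
proof (cases "x + s1 \<le> n")
  case True
  then show ?thesis
    using assms by (intro that[of "x + s1"] arc_up[OF _ s1_in_S]) auto
next
  case False
  then have "t1 < x" using s1_plus_T_le[OF t1_in_T] by simp
  then show ?thesis
    using assms by (intro that[of "x - t1"] arc_down[OF t1_in_T]) auto
qed

lemma relpow_E_range: "(x, y) \<in> E ^^ m \<Longrightarrow> x \<in> {1..n} \<Longrightarrow> y \<in> {1..n}"
  by (induction m arbitrary: y) (auto simp: arc_iff)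

lemma extend_common_successor:
  assumes "(u, k) \<in> E ^^ m" "(v, k) \<in> E ^^ m" "u \<in> {1..n}"
  shows "\<exists>k'. (u, k') \<in> E ^^ (m + j) \<and> (v, k') \<in> E ^^ (m + j)"
proof (induction j)
  case 0
  then show ?case using assms by auto
next
  case (Suc j)
  then obtain k' where k': "(u, k') \<in> E ^^ (m + j)" "(v, k') \<in> E ^^ (m + j)"
    by blast
  obtain k'' where "(k', k'') \<in> E"
    using out_arc relpow_E_range[OF k'(1) assms(3)] by blast
  then show ?case using k' by auto
qed

definition walk :: "nat \<Rightarrow> nat \<Rightarrow> nat \<Rightarrow> int \<Rightarrow> bool" where
  "walk m x y \<delta> \<longleftrightarrow> (x, y) \<in> E ^^ m \<and> int N dvd int y - int x - int m * int s1 - \<delta>"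

lemma walk_0: "walk 0 x x 0"
  unfolding walk_def by simp

lemma walk_arc: "(x, y) \<in> E \<Longrightarrow> walk 1 x y (int y - int x - int s1)"
  unfolding walk_def by simp

lemma walk_trans:
  assumes "walk m1 x y \<delta>1" and "walk m2 y z \<delta>2"
  shows "walk (m1 + m2) x z (\<delta>1 + \<delta>2)"
proof -
  have "(x, z) \<in> E ^^ (m1 + m2)"
    using assms relpow_add unfolding walk_def by blast
  moreover have "int N dvd (int y - int x - int m1 * int s1 - \<delta>1) + (int z - int y - int m2 * int s1 - \<delta>2)"
    using assms unfolding walk_def by (intro dvd_add) auto
  ultimately show ?thesis
    unfolding walk_def by (simp add: algebra_simps)
qed

lemma walk_up_s1: "1 \<le> x \<Longrightarrow> x + s1 \<le> n \<Longrightarrow> walk 1 x (x + s1) 0"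
  using arc_up[OF _ s1_in_S] unfolding walk_def by simp

lemma walk_down_t1:
  assumes "t1 < x" "x \<le> n"
  shows "walk 1 x (x - t1) 0"
proof -
  have "int (x - t1) - int x - int 1 * int s1 - 0 = - int N"
    using assms(1) by (simp add: N_def of_nat_diff)
  then show ?thesis
    using arc_down[OF t1_in_T assms] unfolding walk_def by simp
qed

lemma climb: "1 \<le> x \<Longrightarrow> x + k * s1 \<le> n \<Longrightarrow> walk k x (x + k * s1) 0"
proof (induction k)
  case (Suc k)
  then have "walk (k + 1) x (x + k * s1 + s1) (0 + 0)"
    by (intro walk_trans[OF _ walk_up_s1]) simp_all
  then show ?case by (simp add: ac_simps)
qed (simp add: walk_0)

lemma descend: "x \<le> n \<Longrightarrow> k * t1 < x \<Longrightarrow> walk k x (x - k * t1) 0"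
proof (induction k)
  case (Suc k)
  then have "walk (k + 1) x (x - k * t1 - t1) (0 + 0)"
    by (intro walk_trans[OF _ walk_down_t1]) simp_all
  then show ?case by (simp add: diff_diff_add ac_simps)
qed (simp add: walk_0)

lemma climb_to_top:
  assumes "x \<in> {1..n}"
  obtains y where "walk ((n - x) div s1) x y 0" "n < y + s1" "y \<le> n"
proof
  let ?k = "(n - x) div s1"
  have "?k * s1 + (n - x) mod s1 = n - x" "(n - x) mod s1 < s1" "x \<le> n"
    using div_mult_mod_eq s1_pos assms by simp_all
  then show "n < x + ?k * s1 + s1" "x + ?k * s1 \<le> n"
    by linarith+
  then show "walk ?k x (x + ?k * s1) 0"
    using assms by (intro climb) simp_all
qed

lemma descend_to_bottom:
  assumes "x \<in> {1..n}"
  obtains y where "walk ((x - 1) div t1) x y 0" "y \<in> {1..t1}"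
proof
  let ?k = "(x - 1) div t1"
  have "?k * t1 + (x - 1) mod t1 = x - 1" "(x - 1) mod t1 < t1" "1 \<le> x" "x \<le> n"
    using div_mult_mod_eq t1_pos assms by simp_all
  then have "?k * t1 < x" "x - ?k * t1 \<le> t1" "x \<le> n"
    by linarith+
  then show "x - ?k * t1 \<in> {1..t1}" and "walk ?k x (x - ?k * t1) 0"
    by (auto intro: descend)
qed

lemma stay_near_top:
  assumes "n < y + N" "y \<le> n"
  obtains y' where "walk k y y' 0" "n < y' + N" "y' \<le> n"
proof (induction k arbitrary: thesis)
  case 0
  then show ?case using assms walk_0 by blast
next
  case (Suc k)
  then obtain y1 where y1: "walk k y y1 0" "n < y1 + N" "y1 \<le> n"
    by blast
  have "1 \<le> y1" using y1(2) N_le_n by simp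
  show ?case
  proof (cases "y1 + s1 \<le> n")
    case True
    then have "walk (k + 1) y (y1 + s1) (0 + 0)"
      using \<open>1 \<le> y1\<close> by (intro walk_trans[OF y1(1) walk_up_s1])
    then show ?thesis using Suc.prems True y1(2) by simp
  next
    case False
    then have "t1 < y1" using s1_plus_T_le[OF t1_in_T] by simp
    then have "walk (k + 1) y (y1 - t1) (0 + 0)"
      by (intro walk_trans[OF y1(1) walk_down_t1] y1(3))
    then show ?thesis using Suc.prems False y1(3) \<open>t1 < y1\<close> by (simp add: N_def)
  qed
qed

lemma near_top_cong_eq:
  assumes "n < x + N" "x \<le> n" "n < y + N" "y \<le> n" and "int N dvd int x - int y"
  shows "x = y"
proof (rule ccontr)
  assume "x \<noteq> y"
  then have "\<bar>int N\<bar> \<le> \<bar>int x - int y\<bar>"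
    using assms(5) by (intro dvd_imp_le_int) simp_all
  then show False using assms(1-4) by linarith
qed

lemma common_successor:
  assumes x: "walk m x x' \<delta>" "n < x' + N" "x' \<le> n"
    and y: "walk m' y y' \<delta>'" "n < y' + N" "y' \<le> n"
    and cong: "int N dvd (int x + \<delta>) - (int y + \<delta>')"
  shows "\<exists>k. (x, k) \<in> E ^^ max m m' \<and> (y, k) \<in> E ^^ max m m'"
proof -
  obtain x'' where x'': "walk (max m m' - m) x' x'' 0" "n < x'' + N" "x'' \<le> n"
    using stay_near_top[OF x(2,3)] .
  obtain y'' where y'': "walk (max m m' - m') y' y'' 0" "n < y'' + N" "y'' \<le> n"
    using stay_near_top[OF y(2,3)] .
  have "walk (max m m') x x'' \<delta>" "walk (max m m') y y'' \<delta>'"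
    using walk_trans[OF x(1) x''(1)] walk_trans[OF y(1) y''(1)] by simp_all
  then have x_k: "(x, x'') \<in> E ^^ max m m'" and y_k: "(y, y'') \<in> E ^^ max m m'"
    and x_dvd: "int N dvd int x'' - int x - int (max m m') * int s1 - \<delta>"
    and y_dvd: "int N dvd int y'' - int y - int (max m m') * int s1 - \<delta>'"
    unfolding walk_def by auto
  have "int N dvd (int x'' - int x - int (max m m') * int s1 - \<delta>)
      - (int y'' - int y - int (max m m') * int s1 - \<delta>') + ((int x + \<delta>) - (int y + \<delta>'))"
    by (rule dvd_add[OF dvd_diff[OF x_dvd y_dvd] cong])
  then have "x'' = y''"
    by (intro near_top_cong_eq[OF x''(2,3) y''(2,3)]) (simp add: algebra_simps)
  then show ?thesis using x_k y_k by blast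
qed

section \<open>Drift sums modulo N\<close>

definition d :: nat where
  "d = Gcd {s + t | s t. s \<in> S \<and> t \<in> T}"

lemma d_dvd_plus: "s \<in> S \<Longrightarrow> t \<in> T \<Longrightarrow> d dvd s + t"
  unfolding d_def by (rule Gcd_dvd) blast

lemma d_dvd_N: "d dvd N"
  unfolding N_def by (rule d_dvd_plus[OF s1_in_S t1_in_T])

lemma d_pos: "0 < d"
  using d_dvd_N s1_pos unfolding N_def by (cases "d = 0") auto

definition S_drifts :: "int set" where
  "S_drifts = (\<lambda>s. int s - int s1) ` S"

definition T_drifts :: "int set" where
  "T_drifts = (\<lambda>t. - int t - int s1) ` T"

lemma d_dvd_drift:
  assumes "\<delta> \<in> S_drifts \<union> T_drifts"
  shows "int d dvd \<delta>"
  using assms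
proof
  assume "\<delta> \<in> S_drifts"
  then obtain s where "s \<in> S" "\<delta> = int (s + t1) - int (s1 + t1)"
    unfolding S_drifts_def by auto
  then show ?thesis
    using d_dvd_plus[OF _ t1_in_T] s1_in_S by (simp only: dvd_diff int_dvd_int_iff)
next
  assume "\<delta> \<in> T_drifts"
  then obtain t where "t \<in> T" and \<delta>: "\<delta> = - (int s1 + int t)"
    unfolding T_drifts_def by auto
  then have "int d dvd int s1 + int t"
    using d_dvd_plus[OF s1_in_S] by (simp flip: of_nat_add)
  then show ?thesis
    unfolding \<delta> by (simp only: dvd_minus_iff)
qed

lemma arc_drift:
  assumes "(x, y) \<in> E"
  shows "int y - int x - int s1 \<in> S_drifts \<union> T_drifts"
proof -
  have "x < y \<and> y - x \<in> S \<or> y < x \<and> x - y \<in> T"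
    using assms by (simp add: arc_iff)
  then show ?thesis
  proof
    assume "x < y \<and> y - x \<in> S"
    then show ?thesis
      unfolding S_drifts_def by (intro UnI1 image_eqI[of _ _ "y - x"]) (auto simp: of_nat_diff)
  next
    assume "y < x \<and> x - y \<in> T"
    then show ?thesis
      unfolding T_drifts_def by (intro UnI2 image_eqI[of _ _ "x - y"]) (auto simp: of_nat_diff)
  qed
qed

lemma relpow_E_mod_d: "(x, y) \<in> E ^^ m \<Longrightarrow> int d dvd int y - int x - int m * int s1"
proof (induction m arbitrary: y)
  case (Suc m)
  then obtain w where "(x, w) \<in> E ^^ m" "(w, y) \<in> E"
    by auto
  then have "int d dvd (int w - int x - int m * int s1) + (int y - int w - int s1)"
    using Suc.IH d_dvd_drift[OF arc_drift] by (intro dvd_add)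
  then show ?case by (simp add: algebra_simps)
qed simp

definition drift_sums :: "int set" where
  "drift_sums = {z. \<exists>ds. set ds \<subseteq> S_drifts \<union> T_drifts \<and> int N dvd sum_list ds - z}"

lemma drift_sums_add: "z1 \<in> drift_sums \<Longrightarrow> z2 \<in> drift_sums \<Longrightarrow> z1 + z2 \<in> drift_sums"
proof -
  assume "z1 \<in> drift_sums" "z2 \<in> drift_sums"
  then obtain ds1 ds2 where ds:
    "set ds1 \<subseteq> S_drifts \<union> T_drifts" "int N dvd sum_list ds1 - z1"
    "set ds2 \<subseteq> S_drifts \<union> T_drifts" "int N dvd sum_list ds2 - z2"
    unfolding drift_sums_def by blast
  then have "int N dvd sum_list (ds1 @ ds2) - (z1 + z2)"
    using dvd_add[OF ds(2,4)] by (simp add: algebra_simps)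
  then show ?thesis
    using ds unfolding drift_sums_def by (intro CollectI exI[of _ "ds1 @ ds2"]) auto
qed

lemma drift_sums_cong:
  assumes "z \<in> drift_sums" and "int N dvd z - z'"
  shows "z' \<in> drift_sums"
proof -
  obtain ds where ds: "set ds \<subseteq> S_drifts \<union> T_drifts" "int N dvd sum_list ds - z"
    using assms(1) unfolding drift_sums_def by blast
  have "int N dvd (sum_list ds - z) + (z - z')"
    using ds(2) assms(2) by (rule dvd_add)
  then show ?thesis
    using ds(1) unfolding drift_sums_def by auto
qed

lemma drift_in_drift_sums: "\<delta> \<in> S_drifts \<union> T_drifts \<Longrightarrow> \<delta> \<in> drift_sums"
  unfolding drift_sums_def by (intro CollectI exI[of _ "[\<delta>]"]) simp

lemma zero_in_drift_sums: "0 \<in> drift_sums"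
  unfolding drift_sums_def by (intro CollectI exI[of _ "[]"]) simp

lemma drift_sums_mult_nat: "z \<in> drift_sums \<Longrightarrow> int k * z \<in> drift_sums"
  by (induction k) (auto simp: zero_in_drift_sums algebra_simps intro: drift_sums_add)

lemma drift_sums_mult:
  assumes "z \<in> drift_sums"
  shows "j * z \<in> drift_sums"
proof -
  have "int (nat (j mod int N)) * z \<in> drift_sums"
    using drift_sums_mult_nat[OF assms] .
  moreover have "int N dvd int (nat (j mod int N)) * z - j * z"
  proof -
    have "int (nat (j mod int N)) * z - j * z = - (int N * (j div int N) * z)"
      using s1_pos by (simp add: N_def minus_mod_eq_mult_div [symmetric] algebra_simps)
    then show ?thesis by simp
  qed
  ultimately show ?thesis
    by (rule drift_sums_cong)
qed

lemma dvd_d_in_drift_sums: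
  assumes "int d dvd z"
  shows "z \<in> drift_sums"
proof -
  have "int (s + t) \<in> drift_sums" if "s \<in> S" "t \<in> T" for s t
  proof -
    have "(int s - int s1) + (-1) * (- int t - int s1) \<in> drift_sums"
      using that by (intro drift_sums_add drift_sums_mult drift_in_drift_sums) (auto simp: S_drifts_def T_drifts_def)
    then show ?thesis by simp
  qed
  moreover have "finite {s + t | s t. s \<in> S \<and> t \<in> T}"
    using finite_image_set2[of "\<lambda>s. s \<in> S" "\<lambda>t. t \<in> T" "(+)"] finite_S finite_T by simp
  ultimately have "int d \<in> drift_sums"
    unfolding d_def
    by (intro Gcd_mem_closed zero_in_drift_sums drift_sums_add drift_sums_mult) auto
  then show ?thesis
    using assms drift_sums_mult[of "int d"] by (auto simp: mult.commute)
qed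

lemma short_drift_representation:
  assumes "z \<in> drift_sums"
  obtains ds where "set ds \<subseteq> S_drifts \<union> T_drifts" "int N dvd sum_list ds - z"
    "length ds < N div d" "\<And>\<delta>. \<delta> \<in> set ds \<Longrightarrow> \<not> int N dvd \<delta>"
proof -
  let ?rep = "\<lambda>ds. set ds \<subseteq> S_drifts \<union> T_drifts \<and> int N dvd sum_list ds - z"
  obtain ds where ds: "?rep ds" and min: "\<And>ds'. ?rep ds' \<Longrightarrow> length ds \<le> length ds'"
    using assms ex_has_least_nat[of ?rep _ length] unfolding drift_sums_def by blast
  have no_zero_block: "\<not> int N dvd sum_list zs" if "ds = ys @ zs @ ws" "zs \<noteq> []" for ys zs ws
  proof
    assume "int N dvd sum_list zs"
    then have "?rep (ys @ ws)"
      using ds that(1) dvd_diff[of "int N" "sum_list ds - z" "sum_list zs"]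
      by (auto simp: algebra_simps)
    then show False
      using min[of "ys @ ws"] that by simp
  qed
  show ?thesis
  proof (rule that)
    show "length ds < N div d"
    proof (rule ccontr)
      have N_eq: "int d * int (N div d) = int N"
        using d_dvd_N by (simp flip: of_nat_mult)
      assume "\<not> length ds < N div d"
      moreover have "0 < N div d"
        using d_dvd_N d_pos s1_pos by (simp add: N_def div_greater_zero_iff dvd_imp_le)
      ultimately have "\<exists>ys zs ws. ds = ys @ zs @ ws \<and> zs \<noteq> [] \<and> int d * int (N div d) dvd sum_list zs"
        using ds d_dvd_drift by (intro zero_sum_block) auto
      then show False
        using no_zero_block N_eq by auto
    qed
  next
    fix \<delta> assume "\<delta> \<in> set ds"
    then obtain ys ws where "ds = ys @ [\<delta>] @ ws"
      using split_list by (metis append_Cons append_Nil)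
    then show "\<not> int N dvd \<delta>"
      using no_zero_block[of ys "[\<delta>]" ws] by simp
  qed (use ds in auto)
qed

end

section \<open>Lengths of the walks\<close>

locale toeplitz_bounds = toeplitz_digraph +
  fixes X Y c :: nat
  assumes Max_T_le: "Max T \<le> X * s1" and Max_S_le: "Max S \<le> Y * t1" and n_le: "n \<le> c * d"
begin

lemma T_drift_walk:
  assumes "n < z + s1" "z \<le> n" "\<delta> \<in> T_drifts"
  obtains m y where "m \<le> X + 1" "walk m z y \<delta>" "n < y + s1" "y \<le> n"
proof -
  obtain t where t: "t \<in> T" "\<delta> = - int t - int s1"
    using assms(3) unfolding T_drifts_def by blast
  have "t < z"
    using assms(1) s1_plus_T_le[OF t(1)] by linarith
  then have step: "walk 1 z (z - t) \<delta>"
    using walk_arc[OF arc_down[OF t(1) \<open>t < z\<close> assms(2)]] t(2) by (simp add: of_nat_diff)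
  have "z - t \<in> {1..n}"
    using \<open>t < z\<close> assms(2) by auto
  then obtain y where y: "walk ((n - (z - t)) div s1) (z - t) y 0" "n < y + s1" "y \<le> n"
    by (rule climb_to_top)
  have "t \<le> X * s1"
    using Max_ge[OF finite_T t(1)] Max_T_le by linarith
  moreover have "n - (z - t) < s1 + t"
    using assms(1,2) \<open>t < z\<close> by linarith
  ultimately have "n - (z - t) < (X + 1) * s1"
    by simp
  then have "(n - (z - t)) div s1 < X + 1"
    by (rule less_mult_imp_div_less)
  then show ?thesis
    using that[of "1 + (n - (z - t)) div s1" y] walk_trans[OF step y(1)] y(2,3) by simp
qed

lemma S_drift_walk:
  assumes "z \<in> {1..t1}" "\<delta> \<in> S_drifts"
  obtains m y where "m \<le> Y + 1" "walk m z y \<delta>" "y \<in> {1..t1}"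
proof -
  obtain s where s: "s \<in> S" "\<delta> = int s - int s1"
    using assms(2) unfolding S_drifts_def by blast
  have "z + s \<le> n"
    using assms(1) S_plus_t1_le[OF s(1)] by simp
  then have step: "walk 1 z (z + s) \<delta>"
    using walk_arc[OF arc_up[OF _ s(1)]] s(2) assms(1) by simp
  have "z + s \<in> {1..n}"
    using \<open>z + s \<le> n\<close> assms(1) by auto
  then obtain y where y: "walk ((z + s - 1) div t1) (z + s) y 0" "y \<in> {1..t1}"
    by (rule descend_to_bottom)
  have "s \<le> Y * t1"
    using Max_ge[OF finite_S s(1)] Max_S_le by linarith
  moreover have "(Y + 1) * t1 = Y * t1 + t1"
    by simp
  ultimately have "z + s - 1 < (Y + 1) * t1"
    using assms(1) by auto
  then have "(z + s - 1) div t1 < Y + 1"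
    by (rule less_mult_imp_div_less)
  then show ?thesis
    using that[of "1 + (z + s - 1) div t1" y] walk_trans[OF step y(1)] y(2) by simp
qed

lemma T_drifts_walk:
  assumes "n < z + s1" "z \<le> n" "set ds \<subseteq> T_drifts"
  obtains m y where "m \<le> length ds * (X + 1)" "walk m z y (sum_list ds)" "n < y + s1" "y \<le> n"
proof -
  have "\<exists>m y. m \<le> length ds * (X + 1) \<and> walk m z y (sum_list ds) \<and> n < y + s1 \<and> y \<le> n"
    using assms
  proof (induction ds arbitrary: z)
    case Nil
    then show ?case using walk_0 by auto
  next
    case (Cons \<delta> ds)
    have \<delta>: "\<delta> \<in> T_drifts" and ds: "set ds \<subseteq> T_drifts"
      using Cons.prems(3) by auto
    obtain m1 y1 where 1: "m1 \<le> X + 1" "walk m1 z y1 \<delta>" "n < y1 + s1" "y1 \<le> n"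
      using T_drift_walk[OF Cons.prems(1,2) \<delta>] .
    obtain m2 y2 where 2: "m2 \<le> length ds * (X + 1)" "walk m2 y1 y2 (sum_list ds)" "n < y2 + s1" "y2 \<le> n"
      using Cons.IH[OF 1(3,4) ds] by blast
    have "walk (m1 + m2) z y2 (sum_list (\<delta> # ds))"
      using walk_trans[OF 1(2) 2(2)] by simp
    moreover have "m1 + m2 \<le> length (\<delta> # ds) * (X + 1)"
      using 1(1) 2(1) by simp
    ultimately show ?case
      using 2(3,4) by blast
  qed
  then show ?thesis using that by blast
qed

lemma S_drifts_walk:
  assumes "z \<in> {1..t1}" "set ds \<subseteq> S_drifts"
  obtains m y where "m \<le> length ds * (Y + 1)" "walk m z y (sum_list ds)" "y \<in> {1..t1}"
proof -
  have "\<exists>m y. m \<le> length ds * (Y + 1) \<and> walk m z y (sum_list ds) \<and> y \<in> {1..t1}"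
    using assms
  proof (induction ds arbitrary: z)
    case Nil
    then show ?case using walk_0 by auto
  next
    case (Cons \<delta> ds)
    have \<delta>: "\<delta> \<in> S_drifts" and ds: "set ds \<subseteq> S_drifts"
      using Cons.prems(2) by auto
    obtain m1 y1 where 1: "m1 \<le> Y + 1" "walk m1 z y1 \<delta>" "y1 \<in> {1..t1}"
      using S_drift_walk[OF Cons.prems(1) \<delta>] .
    obtain m2 y2 where 2: "m2 \<le> length ds * (Y + 1)" "walk m2 y1 y2 (sum_list ds)" "y2 \<in> {1..t1}"
      using Cons.IH[OF 1(3) ds] by blast
    have "walk (m1 + m2) z y2 (sum_list (\<delta> # ds))"
      using walk_trans[OF 1(2) 2(2)] by simp
    moreover have "m1 + m2 \<le> length (\<delta> # ds) * (Y + 1)"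
      using 1(1) 2(1) by simp
    ultimately show ?case
      using 2(3) by blast
  qed
  then show ?thesis using that by blast
qed

lemma top_route:
  assumes "x \<in> {1..n}" "set ds \<subseteq> T_drifts"
  obtains m y where "m \<le> n div s1 + length ds * (X + 1)" "walk m x y (sum_list ds)"
    "n < y + s1" "y \<le> n"
proof -
  obtain y1 where 1: "walk ((n - x) div s1) x y1 0" "n < y1 + s1" "y1 \<le> n"
    using climb_to_top[OF assms(1)] .
  obtain m2 y2 where 2: "m2 \<le> length ds * (X + 1)" "walk m2 y1 y2 (sum_list ds)"
    "n < y2 + s1" "y2 \<le> n"
    using T_drifts_walk[OF 1(2,3) assms(2)] .
  have "(n - x) div s1 \<le> n div s1"
    by (simp add: div_le_mono)
  then have "(n - x) div s1 + m2 \<le> n div s1 + length ds * (X + 1)"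
    using 2(1) by linarith
  moreover have "walk ((n - x) div s1 + m2) x y2 (sum_list ds)"
    using walk_trans[OF 1(1) 2(2)] by simp
  ultimately show ?thesis
    using that 2(3,4) by blast
qed

lemma bottom_route:
  assumes "x \<in> {1..n}" "set ds \<subseteq> S_drifts"
  obtains m y where "m \<le> n div t1 + length ds * (Y + 1)" "walk m x y (sum_list ds)" "y \<in> {1..t1}"
proof -
  obtain y1 where 1: "walk ((x - 1) div t1) x y1 0" "y1 \<in> {1..t1}"
    using descend_to_bottom[OF assms(1)] .
  obtain m2 y2 where 2: "m2 \<le> length ds * (Y + 1)" "walk m2 y1 y2 (sum_list ds)" "y2 \<in> {1..t1}"
    using S_drifts_walk[OF 1(2) assms(2)] .
  have "(x - 1) div t1 \<le> n div t1"
    using assms(1) by (intro div_le_mono) auto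
  then have "(x - 1) div t1 + m2 \<le> n div t1 + length ds * (Y + 1)"
    using 2(1) by linarith
  moreover have "walk ((x - 1) div t1 + m2) x y2 (sum_list ds)"
    using walk_trans[OF 1(1) 2(2)] by simp
  ultimately show ?thesis
    using that 2(3) by blast
qed

lemma bottom_top_route:
  assumes "x \<in> {1..n}" "set ps \<subseteq> S_drifts" "set qs \<subseteq> T_drifts"
  obtains m y where "m \<le> n div t1 + n div s1 + length ps * (Y + 1) + length qs * (X + 1)"
    "walk m x y (sum_list ps + sum_list qs)" "n < y + s1" "y \<le> n"
proof -
  obtain m1 y1 where 1: "m1 \<le> n div t1 + length ps * (Y + 1)" "walk m1 x y1 (sum_list ps)"
    "y1 \<in> {1..t1}"
    using bottom_route[OF assms(1,2)] .
  have "y1 \<in> {1..n}"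
    using 1(3) S_plus_t1_le[OF s1_in_S] by simp
  then obtain m2 y2 where 2: "m2 \<le> n div s1 + length qs * (X + 1)"
    "walk m2 y1 y2 (sum_list qs)" "n < y2 + s1" "y2 \<le> n"
    using top_route assms(3) by blast
  show ?thesis
    using that[of "m1 + m2" y2] walk_trans[OF 1(2) 2(2)] 1(1) 2(1,3,4) by simp
qed

definition L :: nat where
  "L = max X Y + 1"

definition index_bound :: nat where
  "index_bound = 2 * (c - 1) * L + 2 * N"

lemma d_le_N: "d \<le> N"
  using d_dvd_N s1_pos by (simp add: N_def dvd_imp_le)

lemma n_div_s1_le: "n div s1 \<le> c * L"
proof -
  have "d \<le> s1 + X * s1"
    using d_le_N Max_ge[OF finite_T t1_in_T] Max_T_le unfolding N_def by linarith
  also have "\<dots> \<le> L * s1"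
    unfolding L_def by simp
  finally have "c * d \<le> c * (L * s1)"
    by (rule mult_le_mono2)
  then have "n \<le> c * L * s1"
    using n_le unfolding mult.assoc by linarith
  then have "n div s1 \<le> c * L * s1 div s1"
    by (rule div_le_mono)
  then show ?thesis
    using s1_pos by simp
qed

lemma n_div_s1_le_index_bound: "n div s1 \<le> index_bound"
proof (cases "2 \<le> c")
  case True
  then have "c * L \<le> 2 * (c - 1) * L"
    by (intro mult_le_mono1) simp
  then show ?thesis
    using n_div_s1_le unfolding index_bound_def by linarith
next
  case False
  then have "c * d \<le> 1 * d"
    by (intro mult_le_mono1) simp
  then have "n \<le> N"
    using n_le d_le_N by linarith
  then show ?thesis
    using div_le_dividend[of n s1] unfolding index_bound_def by linarith
qed

lemma S_gap: "s \<in> S \<Longrightarrow> s \<noteq> s1 \<Longrightarrow> s1 + d \<le> s"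
proof -
  assume s: "s \<in> S" "s \<noteq> s1"
  then have "s1 < s" using s1_le by fastforce
  have "d dvd (s + t1) - (s1 + t1)"
    using d_dvd_plus[OF s(1) t1_in_T] d_dvd_plus[OF s1_in_S t1_in_T] by (rule dvd_diff_nat)
  then have "d \<le> s - s1"
    using \<open>s1 < s\<close> by (intro dvd_imp_le) simp_all
  then show ?thesis using \<open>s1 < s\<close> by simp
qed

lemma T_gap: "t \<in> T \<Longrightarrow> t \<noteq> t1 \<Longrightarrow> t1 + d \<le> t"
proof -
  assume t: "t \<in> T" "t \<noteq> t1"
  then have "t1 < t" using t1_le by fastforce
  have "d dvd (s1 + t) - (s1 + t1)"
    using d_dvd_plus[OF s1_in_S t(1)] d_dvd_plus[OF s1_in_S t1_in_T] by (rule dvd_diff_nat)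
  then have "d \<le> t - t1"
    using \<open>t1 < t\<close> by (intro dvd_imp_le) simp_all
  then show ?thesis using \<open>t1 < t\<close> by simp
qed

lemma S_drift_gap:
  assumes "\<delta> \<in> S_drifts" "\<not> int N dvd \<delta>"
  shows "s1 + d \<le> Max S" "N + d \<le> n"
proof -
  obtain s where s: "s \<in> S" "\<delta> = int s - int s1"
    using assms(1) unfolding S_drifts_def by blast
  then have "s1 + d \<le> s"
    using assms(2) by (intro S_gap) auto
  then show "s1 + d \<le> Max S" "N + d \<le> n"
    using Max_ge[OF finite_S s(1)] S_plus_t1_le[OF s(1)] unfolding N_def by linarith+
qed

lemma T_drift_gap:
  assumes "\<delta> \<in> T_drifts" "\<not> int N dvd \<delta>"
  shows "N + d \<le> n"
proof -
  obtain t where t: "t \<in> T" "\<delta> = - int t - int s1"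
    using assms(1) unfolding T_drifts_def by blast
  moreover have "t \<noteq> t1"
  proof
    assume "t = t1"
    then have "\<delta> = - int N"
      using t(2) by (simp add: N_def)
    then show False
      using assms(2) by simp
  qed
  ultimately have "t1 + d \<le> t"
    by (intro T_gap)
  then show "N + d \<le> n"
    using s1_plus_T_le[OF t(1)] unfolding N_def by linarith
qed

lemma climb_descend_le:
  assumes "s1 + d \<le> Max S" "2 \<le> N div d"
  shows "n div s1 + n div t1 \<le> c * L"
proof -
  have "2 * d \<le> N div d * d"
    using assms(2) by (rule mult_le_mono1)
  then have "2 * d \<le> N"
    using d_dvd_N by simp
  have "d * N \<le> L * s1 * t1"
  proof (cases "d \<le> t1")
    case True
    have "t1 \<le> X * s1"
      using Max_ge[OF finite_T t1_in_T] Max_T_le by linarith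
    then have "t1 * N \<le> (X + 1) * s1 * t1"
      unfolding N_def by (simp add: algebra_simps)
    also have "\<dots> \<le> L * s1 * t1"
      unfolding L_def by (intro mult_le_mono1) simp
    finally show ?thesis
      using True mult_le_mono1[of d t1 N] by linarith
  next
    case False
    then have "d \<le> N" "t1 \<le> s1"
      using \<open>2 * d \<le> N\<close> unfolding N_def by linarith+
    then have "d * t1 \<le> N * s1"
      by (rule mult_le_mono)
    then have "d * N \<le> (s1 + d) * s1 + s1 * t1"
      unfolding N_def by (simp add: algebra_simps)
    also have "\<dots> \<le> (Y + 1) * s1 * t1"
      using assms(1) Max_S_le mult_le_mono1[of "s1 + d" "Y * t1" s1] by (simp add: algebra_simps)
    also have "\<dots> \<le> L * s1 * t1"
      unfolding L_def by (intro mult_le_mono1) simp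
    finally show ?thesis .
  qed
  have "(n div s1 + n div t1) * (s1 * t1) = (n div s1 * s1) * t1 + (n div t1 * t1) * s1"
    by (simp add: algebra_simps)
  also have "\<dots> \<le> n * t1 + n * s1"
    by (intro add_mono mult_le_mono1 div_times_less_eq_dividend)
  also have "\<dots> = n * N"
    by (simp add: N_def algebra_simps)
  also have "\<dots> \<le> c * (d * N)"
    using n_le by (simp add: mult.assoc [symmetric])
  also have "\<dots> \<le> c * L * (s1 * t1)"
    using \<open>d * N \<le> L * s1 * t1\<close> by (simp add: mult.assoc)
  finally show ?thesis
    using s1_pos t1_pos by simp
qed

lemma short_drifts_le_index_bound:
  assumes "ds \<noteq> []" "set ds \<subseteq> S_drifts \<union> T_drifts" "length ds < N div d"
    "\<And>\<delta>. \<delta> \<in> set ds \<Longrightarrow> \<not> int N dvd \<delta>"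
  shows "c * L + length ds * L \<le> index_bound"
proof -
  obtain \<delta> where "\<delta> \<in> set ds"
    using assms(1) by (cases ds) auto
  then have "N + d \<le> n"
    using assms(2,4) S_drift_gap(2) T_drift_gap by blast
  then have "(N div d + 1) * d \<le> c * d"
    using n_le d_dvd_N by simp
  then have "N div d + 1 \<le> c"
    using d_pos by (meson mult_le_cancel2)
  then have "length ds + 2 \<le> c"
    using assms(3) by linarith
  then have "c * L + length ds * L \<le> c * L + (c - 2) * L"
    by (intro add_left_mono mult_le_mono1) simp
  also have "\<dots> = 2 * (c - 1) * L"
    using \<open>length ds + 2 \<le> c\<close> by (simp add: algebra_simps)
  finally show ?thesis
    unfolding index_bound_def by linarith
qed

lemma split_drifts:
  assumes "set ds \<subseteq> S_drifts \<union> T_drifts"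
  obtains ps qs where "set ps \<subseteq> S_drifts \<inter> set ds" "set qs \<subseteq> T_drifts"
    "length ps + length qs = length ds" "sum_list ps + sum_list qs = sum_list ds"
proof
  let ?ps = "filter (\<lambda>\<delta>. 0 \<le> \<delta>) ds" and ?qs = "filter (\<lambda>\<delta>. \<not> 0 \<le> \<delta>) ds"
  have "0 \<le> \<delta>" if "\<delta> \<in> S_drifts" for \<delta>
    using that s1_le unfolding S_drifts_def by auto
  moreover have "\<delta> < 0" if "\<delta> \<in> T_drifts" for \<delta>
    using that s1_pos unfolding T_drifts_def by auto
  ultimately show "set ?ps \<subseteq> S_drifts \<inter> set ds" "set ?qs \<subseteq> T_drifts"
    using assms by force+
  show "length ?ps + length ?qs = length ds"
    by (rule sum_length_filter_compl)
  show "sum_list ?ps + sum_list ?qs = sum_list ds"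
    by (induction ds) auto
qed

lemma drift_walk:
  assumes v: "v \<in> {1..n}" and ds: "set ds \<subseteq> S_drifts \<union> T_drifts" "length ds < N div d"
    "\<And>\<delta>. \<delta> \<in> set ds \<Longrightarrow> \<not> int N dvd \<delta>"
  obtains m y where "m \<le> index_bound" "walk m v y (sum_list ds)" "n < y + s1" "y \<le> n"
proof (cases "ds = []")
  case True
  obtain y where y: "walk ((n - v) div s1) v y 0" "n < y + s1" "y \<le> n"
    using climb_to_top[OF v] .
  have "(n - v) div s1 \<le> index_bound"
    using n_div_s1_le_index_bound div_le_mono[of "n - v" n s1] by linarith
  then show ?thesis
    using that y True by simp
next
  case False
  obtain ps qs where pq: "set ps \<subseteq> S_drifts \<inter> set ds" "set qs \<subseteq> T_drifts"
    "length ps + length qs = length ds" "sum_list ps + sum_list qs = sum_list ds"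
    using split_drifts[OF ds(1)] .
  have drift_steps: "length ps * (Y + 1) + length qs * (X + 1) \<le> length ds * L"
    unfolding pq(3)[symmetric] L_def by (simp add: add_mult_distrib add_mono)
  have bound: "c * L + length ds * L \<le> index_bound"
    using short_drifts_le_index_bound[OF False ds] .
  show ?thesis
  proof (cases "ps = []")
    case True
    obtain m y where y: "m \<le> n div s1 + length qs * (X + 1)" "walk m v y (sum_list qs)"
      "n < y + s1" "y \<le> n"
      using top_route[OF v pq(2)] .
    have "m \<le> index_bound"
      using y(1) n_div_s1_le drift_steps bound True by simp
    then show ?thesis
      using that y(2-4) pq(4) True by simp
  next
    case False
    then obtain \<delta> where "\<delta> \<in> S_drifts" "\<delta> \<in> set ds"
      using pq(1) by (cases ps) auto
    moreover have "2 \<le> N div d"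
      using \<open>\<delta> \<in> set ds\<close> ds(2) by (cases ds) auto
    ultimately have climb_descend: "n div s1 + n div t1 \<le> c * L"
      using S_drift_gap(1) ds(3) climb_descend_le by blast
    have "set ps \<subseteq> S_drifts"
      using pq(1) by blast
    then obtain m y where y: "m \<le> n div t1 + n div s1 + length ps * (Y + 1) + length qs * (X + 1)"
      "walk m v y (sum_list ps + sum_list qs)" "n < y + s1" "y \<le> n"
      using bottom_top_route[OF v _ pq(2)] by blast
    have "m \<le> index_bound"
      using y(1) climb_descend drift_steps bound by linarith
    then show ?thesis
      using that y(2-4) pq(4) by simp
  qed
qed

lemma common_successor_within_bound:
  assumes u: "u \<in> {1..n}" and v: "v \<in> {1..n}" and uv: "int d dvd int u - int v"
  obtains m k where "m \<le> index_bound" "(u, k) \<in> E ^^ m" "(v, k) \<in> E ^^ m"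
proof -
  obtain ds where ds: "set ds \<subseteq> S_drifts \<union> T_drifts" "int N dvd sum_list ds - (int u - int v)"
    "length ds < N div d" "\<And>\<delta>. \<delta> \<in> set ds \<Longrightarrow> \<not> int N dvd \<delta>"
    using short_drift_representation[OF dvd_d_in_drift_sums[OF uv]] by blast
  obtain mv yv where yv: "mv \<le> index_bound" "walk mv v yv (sum_list ds)" "n < yv + s1" "yv \<le> n"
    using drift_walk[OF v ds(1,3,4)] .
  obtain yu where yu: "walk ((n - u) div s1) u yu 0" "n < yu + s1" "yu \<le> n"
    using climb_to_top[OF u] .
  have "(n - u) div s1 \<le> index_bound"
    using n_div_s1_le_index_bound div_le_mono[of "n - u" n s1] by linarith
  moreover have "int N dvd (int u + 0) - (int v + sum_list ds)"
    using ds(2) by (simp add: dvd_diff_commute algebra_simps)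
  then have "\<exists>k. (u, k) \<in> E ^^ max ((n - u) div s1) mv \<and> (v, k) \<in> E ^^ max ((n - u) div s1) mv"
    using yu(2) yv(3) by (intro common_successor[OF yu(1) _ yu(3) yv(2) _ yv(4)]) (auto simp: N_def)
  ultimately show ?thesis
    using that yv(1) by (metis max.bounded_iff)
qed

lemma comp_mat_eventually:
  assumes "index_bound \<le> m"
  shows "comp_mat n (toeplitz n S T) m u v \<longleftrightarrow> u \<in> {1..n} \<and> v \<in> {1..n} \<and> int d dvd int u - int v"
proof -
  have "(\<exists>k. (u, k) \<in> E ^^ m \<and> (v, k) \<in> E ^^ m) \<longleftrightarrow> int d dvd int u - int v"
    if uv: "u \<in> {1..n}" "v \<in> {1..n}"
  proof
    assume "\<exists>k. (u, k) \<in> E ^^ m \<and> (v, k) \<in> E ^^ m"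
    then obtain k where "(u, k) \<in> E ^^ m" "(v, k) \<in> E ^^ m"
      by blast
    then have "int d dvd (int k - int v - int m * int s1) - (int k - int u - int m * int s1)"
      by (intro dvd_diff relpow_E_mod_d)
    then show "int d dvd int u - int v"
      by simp
  next
    assume "int d dvd int u - int v"
    then obtain m' k where "m' \<le> index_bound" "(u, k) \<in> E ^^ m'" "(v, k) \<in> E ^^ m'"
      using common_successor_within_bound[OF uv] by blast
    then show "\<exists>k. (u, k) \<in> E ^^ m \<and> (v, k) \<in> E ^^ m"
      using extend_common_successor[of u k m' v "m - m'"] uv assms by auto
  qed
  moreover have "comp_mat n (toeplitz n S T) m u v \<longleftrightarrow>
      u \<in> {1..n} \<and> v \<in> {1..n} \<and> (\<exists>k. (u, k) \<in> E ^^ m \<and> (v, k) \<in> E ^^ m)"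
    by (rule comp_mat_iff) (rule toeplitz_range)
  ultimately show ?thesis
    by blast
qed

lemma c_pos: "1 \<le> c"
  using n_le N_le_n s1_pos unfolding N_def by (cases c) simp_all

lemma int_index_bound:
  "int index_bound = 2 * (int c - 1) * (max (int X) (int Y) + 1) + 2 * int N"
proof -
  have "int index_bound = 2 * (int c - 1) * (int (max X Y) + 1) + 2 * int N"
    unfolding index_bound_def L_def using c_pos by (simp add: of_nat_diff, simp add: algebra_simps)
  then show ?thesis
    by (simp add: of_nat_max)
qed

lemma competition_index_le_index_bound: "competition_index n (toeplitz n S T) \<le> index_bound"
proof (rule competition_index_le)
  show "0 < index_bound"
    using s1_pos unfolding index_bound_def N_def by simp
  show "comp_mat n (toeplitz n S T) m = comp_mat n (toeplitz n S T) index_bound"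
    if "index_bound \<le> m" for m
    using that comp_mat_eventually by (intro ext) simp
qed

end

lemma of_nat_nat_ceiling_divide: "int (nat \<lceil>real p / real q\<rceil>) = \<lceil>real p / real q\<rceil>"
proof -
  have "0 \<le> real p / real q"
    by simp
  also have "\<dots> \<le> of_int \<lceil>real p / real q\<rceil>"
    by (rule le_of_int_ceiling)
  finally show ?thesis
    by simp
qed

lemma le_nat_ceiling_divide:
  assumes "0 < q"
  shows "p \<le> nat \<lceil>real p / real q\<rceil> * q"
proof -
  have "real p \<le> of_int \<lceil>real p / real q\<rceil> * real q"
    using assms by (intro ceiling_divide_upper) simp
  also have "\<dots> = real (nat \<lceil>real p / real q\<rceil> * q)"
    by (metis of_int_of_nat_eq of_nat_mult of_nat_nat_ceiling_divide)
  finally show ?thesis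
    by (rule of_nat_le_iff[THEN iffD1])
qed

theorem theorem3p5:
  fixes n :: nat and S T :: "nat set"
  assumes "S \<noteq> {}" and "T \<noteq> {}"
    and "S \<subseteq> {1..n-1}" and "T \<subseteq> {1..n-1}"
    and "Max S + Min T \<le> n" and "Min S + Max T \<le> n"
  defines "A \<equiv> toeplitz n S T"
    and "d \<equiv> Gcd {s + t | s t. s \<in> S \<and> t \<in> T}"
  assumes "\<forall>i\<in>{1..d}. irreducible_on {v \<in> {1..n}. v mod d = i mod d} (bmult n A (btrans n A))"
  shows "int (competition_index n A) \<le>
    2 * (\<lceil>real n / real d\<rceil> - 1) *
      (max \<lceil>real (Max T) / real (Min S)\<rceil> \<lceil>real (Max S) / real (Min T)\<rceil> + 1)
    + 2 * int (Min S + Min T)"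
proof -
  interpret G: toeplitz_digraph n S T
    using assms(1-6) by unfold_locales
  define X where "X = nat \<lceil>real (Max T) / real (Min S)\<rceil>"
  define Y where "Y = nat \<lceil>real (Max S) / real (Min T)\<rceil>"
  define c where "c = nat \<lceil>real n / real d\<rceil>"
  interpret B: toeplitz_bounds n S T X Y c
    by unfold_locales
      (use G.s1_pos G.t1_pos G.d_pos in
        \<open>simp_all add: X_def Y_def c_def d_def G.s1_def G.t1_def G.d_def le_nat_ceiling_divide\<close>)
  have "int (competition_index n A) \<le> int B.index_bound"
    using B.competition_index_le_index_bound unfolding A_def by (rule of_nat_mono)
  then show ?thesis
    unfolding B.int_index_bound G.N_def G.s1_def G.t1_def
    unfolding X_def Y_def c_def of_nat_nat_ceiling_divide .
qed

end
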